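(* Consider the channel $\mathbf r=\mathbf s+\sigma_0\boldsymbol\eta$ in $\mathbb R^n$, where the normalized noise $\boldsymbol\eta$ has density $\int_0^\infty(2\pi\sigma^2)^{-n/2}\exp\{-|\mathbf x|^2/(2\sigma^2)\}f(\sigma)\,d\sigma$ for a univariate probability density $f(\sigma)$ with $f(\sigma)=0$ for $\sigma\notin[\sigma_1,\sigma_2]$, and let $\gamma=1/\sigma_0^2$. For any decoder with center-convex decision regions (e.g. the min-distance decoder, for any constellation, bit mapping and coding), the pairwise error probabilities $\Pr\{\mathbf s_i\to\mathbf s_j\}$, the SER and the BER are convex functions of $\gamma$ in the high-SNR/low-noise regime $d_{\min}^2\ge(n+\sqrt{2n})(\sigma_0\sigma_2)^2$.
   Context: Setting: $\mathbf s\in\{\mathbf s_1,\dots,\mathbf s_M\}$ with priors $\pi_k$; the decoder has pairwise disjoint decision regions $\Omega_k$ independent of $\gamma$ (output $\mathbf s_k$ if $\mathbf r\in\Omega_k$, error if in none); $\Omega_k$ is center-convex if for every $\mathbf x\in\Omega_k$ the segment from $\mathbf s_k$ to $\mathbf x$ lies in $\Omega_k$. PEP: $\Pr\{\mathbf s_i\to\mathbf s_j\}=\Pr[\mathbf r\in\Omega_j\mid\mathbf s=\mathbf s_i]$, $i\neq j$. SER: $P_e=\sum_i\pi_i(1-\Pr[\mathbf r\in\Omega_i\mid\mathbf s=\mathbf s_i])$. BER: $\sum_i\sum_{j\ne i}\frac{h_{ij}}{\log_2M}\pi_i\Pr\{\mathbf s_i\to\mathbf s_j\}$, where $h_{ij}$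 is the Hamming distance between the bit labels of $\mathbf s_i$ and $\mathbf s_j$. $d_{\min}=\min_k d_{\min,k}$, where $d_{\min,k}$ is the minimum distance from $\mathbf s_k$ to the boundary of $\Omega_k$. Convexity in the stated regime means nonnegative second derivative in $\gamma$ for all $\gamma\ge(n+\sqrt{2n})\sigma_2^2/d_{\min}^2$. *)

theory Defs
  imports "HOL-Analysis.Analysis"
begin

definition noise_density :: "(real \<Rightarrow> real) \<Rightarrow> real ^ 'n \<Rightarrow> real" where
  "noise_density f x =
     (LINT \<sigma>:{0<..}|lborel.
        (2 * pi * \<sigma>\<^sup>2) powr (- real CARD('n) / 2) * exp (- (norm x)\<^sup>2 / (2 * \<sigma>\<^sup>2)) * f \<sigma>)"

text \<open>Pr[r in A | s] for r = s + sigma0 eta, with gamma = 1/sigma0^2 (so sigma0 = 1/sqrt gamma);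
  the density of r is sigma0^(-n) g((r - s)/sigma0).\<close>
definition prob_in :: "(real \<Rightarrow> real) \<Rightarrow> real ^ 'n \<Rightarrow> (real ^ 'n) set \<Rightarrow> real \<Rightarrow> real" where
  "prob_in f s A \<gamma> =
     (LINT r:A|lborel. (sqrt \<gamma>) ^ CARD('n) * noise_density f (sqrt \<gamma> *\<^sub>R (r - s)))"

definition pep :: "(real \<Rightarrow> real) \<Rightarrow> (nat \<Rightarrow> real ^ 'n) \<Rightarrow> (nat \<Rightarrow> (real ^ 'n) set)
     \<Rightarrow> nat \<Rightarrow> nat \<Rightarrow> real \<Rightarrow> real" where
  "pep f s \<Omega> i j \<gamma> = prob_in f (s i) (\<Omega> j) \<gamma>"

definition ser :: "(real \<Rightarrow> real) \<Rightarrow> nat \<Rightarrow> (nat \<Rightarrow> real) \<Rightarrow> (nat \<Rightarrow> real ^ 'n)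
     \<Rightarrow> (nat \<Rightarrow> (real ^ 'n) set) \<Rightarrow> real \<Rightarrow> real" where
  "ser f M \<pi> s \<Omega> \<gamma> = (\<Sum>i<M. \<pi> i * (1 - prob_in f (s i) (\<Omega> i) \<gamma>))"

definition hamming :: "bool list \<Rightarrow> bool list \<Rightarrow> nat" where
  "hamming u v = card {b. b < length u \<and> u ! b \<noteq> v ! b}"

definition ber :: "(real \<Rightarrow> real) \<Rightarrow> nat \<Rightarrow> (nat \<Rightarrow> real) \<Rightarrow> (nat \<Rightarrow> bool list)
     \<Rightarrow> (nat \<Rightarrow> real ^ 'n) \<Rightarrow> (nat \<Rightarrow> (real ^ 'n) set) \<Rightarrow> real \<Rightarrow> real" where
  "ber f M \<pi> lab s \<Omega> \<gamma> =
     (\<Sum>i<M. \<Sum>j\<in>{..<M} - {i}.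
        real (hamming (lab i) (lab j)) / log 2 (real M) * \<pi> i * pep f s \<Omega> i j \<gamma>)"

definition center_convex :: "real ^ 'n \<Rightarrow> (real ^ 'n) set \<Rightarrow> bool" where
  "center_convex c A \<longleftrightarrow> (\<forall>x\<in>A. closed_segment c x \<subseteq> A)"

definition dmin :: "nat \<Rightarrow> (nat \<Rightarrow> real ^ 'n) \<Rightarrow> (nat \<Rightarrow> (real ^ 'n) set) \<Rightarrow> real" where
  "dmin M s \<Omega> = Min ((\<lambda>k. infdist (s k) (frontier (\<Omega> k))) ` {..<M})"

definition convex_in_regime :: "(real \<Rightarrow> real) \<Rightarrow> real set \<Rightarrow> bool" where
  "convex_in_regime P S \<longleftrightarrow>
     (\<exists>P' P''. \<forall>\<gamma>\<in>S. (P has_real_derivative P' \<gamma>) (at \<gamma>) \<and>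
                      (P' has_real_derivative P'' \<gamma>) (at \<gamma>) \<and> P'' \<gamma> \<ge> 0)"

end

theory Submission
  imports Defs "HOL-Probability.Distributions"
begin

text \<open>
  Conditioned on the mixing scale sigma, the received vector is Gaussian with variance
  sigma^2/gamma per coordinate, so its density at squared distance rho from the sent point is
  (2 pi sigma^2)^(-n/2) gamma^(n/2) exp (-gamma a) with a = rho/(2 sigma^2). The second
  gamma-derivative of gamma^(n/2) exp (-gamma a) is
  gamma^(n/2) exp (-gamma a) ((n/(2 gamma) - a)^2 - n/(2 gamma^2)), which is nonnegative as soon
  as gamma a >= n/2 + sqrt (n/2). A center-convex decision region contains the open ball of
  radius d_min around its point, so every region a wrong decision can fall into lies at
  distance >= d_min from the sent point; in the stated regime the integrand of the second
  derivative of each PEP, and of one minus each correct-decision probability, is then pointwise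
  nonnegative. SER and BER are nonnegative combinations of these, up to a constant.
  Differentiating twice under both integrals is justified by dominated convergence, with
  Gaussian dominating functions that are uniform for gamma in a neighbourhood and sigma in
  [sigma_1, sigma_2].
\<close>

lemma abs_diff_le_of_deriv_bound:
  fixes u u' :: "real \<Rightarrow> real"
  assumes g: "\<bar>g - \<gamma>\<bar> < \<delta>"
    and der: "\<And>z. \<bar>z - \<gamma>\<bar> < \<delta> \<Longrightarrow> (u has_real_derivative u' z) (at z)"
    and bnd: "\<And>z. \<bar>z - \<gamma>\<bar> < \<delta> \<Longrightarrow> \<bar>u' z\<bar> \<le> B"
  shows "\<bar>u g - u \<gamma>\<bar> \<le> B * \<bar>g - \<gamma>\<bar>"
proof -
  have "norm (u g - u \<gamma>) \<le> B * norm (g - \<gamma>)"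
  proof (rule field_differentiable_bound[where S="ball \<gamma> \<delta>" and f'=u'])
    fix z assume "z \<in> ball \<gamma> \<delta>"
    then have z: "\<bar>z - \<gamma>\<bar> < \<delta>" by (simp add: dist_real_def abs_minus_commute)
    show "(u has_field_derivative u' z) (at z within ball \<gamma> \<delta>)"
      using der[OF z] by (rule has_field_derivative_at_within)
    show "norm (u' z) \<le> B" using bnd[OF z] by simp
  qed (use g in \<open>auto simp: dist_real_def abs_minus_commute\<close>)
  then show ?thesis by simp
qed

lemma has_real_derivative_integral_dominated:
  fixes \<phi> \<phi>' :: "real \<Rightarrow> 'a \<Rightarrow> real" and B :: "'a \<Rightarrow> real"
  assumes \<delta>: "0 < \<delta>"
    and meas: "\<And>g. \<bar>g - \<gamma>\<bar> < \<delta> \<Longrightarrow> \<phi> g \<in> borel_measurable M"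
    and meas': "\<phi>' \<gamma> \<in> borel_measurable M"
    and int: "integrable M (\<phi> \<gamma>)"
    and der: "\<And>g x. \<bar>g - \<gamma>\<bar> < \<delta> \<Longrightarrow> x \<in> space M \<Longrightarrow>
                ((\<lambda>g. \<phi> g x) has_real_derivative \<phi>' g x) (at g)"
    and bnd: "\<And>g x. \<bar>g - \<gamma>\<bar> < \<delta> \<Longrightarrow> x \<in> space M \<Longrightarrow> \<bar>\<phi>' g x\<bar> \<le> B x"
    and intB: "integrable M B"
  shows "((\<lambda>g. \<integral>x. \<phi> g x \<partial>M) has_real_derivative (\<integral>x. \<phi>' \<gamma> x \<partial>M)) (at \<gamma>)"
proof -
  have lip: "\<bar>\<phi> (\<gamma> + h) x - \<phi> \<gamma> x\<bar> \<le> B x * \<bar>h\<bar>" if "\<bar>h\<bar> < \<delta>" "x \<in> space M" for h x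
    using abs_diff_le_of_deriv_bound[of "\<gamma> + h" \<gamma> \<delta> "\<lambda>g. \<phi> g x" "\<lambda>g. \<phi>' g x" "B x"] der bnd that
    by auto
  have intg: "integrable M (\<phi> (\<gamma> + h))" if h: "\<bar>h\<bar> < \<delta>" for h
  proof (rule Bochner_Integration.integrable_bound[where f="\<lambda>x. \<bar>\<phi> \<gamma> x\<bar> + \<delta> * B x"])
    show "integrable M (\<lambda>x. \<bar>\<phi> \<gamma> x\<bar> + \<delta> * B x)" using int intB by auto
    show "\<phi> (\<gamma> + h) \<in> borel_measurable M" using meas h by simp
    show "AE x in M. norm (\<phi> (\<gamma> + h) x) \<le> norm (\<bar>\<phi> \<gamma> x\<bar> + \<delta> * B x)"
    proof (rule AE_I2)
      fix x assume x: "x \<in> space M"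
      have B0: "0 \<le> B x" using bnd[of \<gamma> x] \<delta> x by auto
      have "B x * \<bar>h\<bar> \<le> \<delta> * B x" using mult_left_mono[OF less_imp_le[OF h] B0] by (simp add: mult.commute)
      then show "norm (\<phi> (\<gamma> + h) x) \<le> norm (\<bar>\<phi> \<gamma> x\<bar> + \<delta> * B x)" using lip[OF h x] B0 \<delta> by simp
    qed
  qed
  have "((\<lambda>h. ((\<integral>x. \<phi> (\<gamma> + h) x \<partial>M) - (\<integral>x. \<phi> \<gamma> x \<partial>M)) / h) \<longlongrightarrow> (\<integral>x. \<phi>' \<gamma> x \<partial>M))
          (at 0 within ball 0 \<delta>)"
  proof (subst tendsto_at_iff_sequentially, intro allI impI)
    fix X :: "nat \<Rightarrow> real"
    assume "\<forall>i. X i \<in> ball 0 \<delta> - {0}" and X0: "X \<longlonglongrightarrow> 0"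
    then have X: "\<bar>X i\<bar> < \<delta>" "X i \<noteq> 0" for i by auto
    have quotient: "((\<integral>x. \<phi> (\<gamma> + X i) x \<partial>M) - (\<integral>x. \<phi> \<gamma> x \<partial>M)) / X i
        = (\<integral>x. (\<phi> (\<gamma> + X i) x - \<phi> \<gamma> x) / X i \<partial>M)" for i
      using intg[OF X(1)] int by simp
    have "(\<lambda>i. \<integral>x. (\<phi> (\<gamma> + X i) x - \<phi> \<gamma> x) / X i \<partial>M) \<longlonglongrightarrow> (\<integral>x. \<phi>' \<gamma> x \<partial>M)"
    proof (rule integral_dominated_convergence[where w=B])
      show "(\<lambda>x. (\<phi> (\<gamma> + X i) x - \<phi> \<gamma> x) / X i) \<in> borel_measurable M" for i
        using meas[of "\<gamma> + X i"] meas[of \<gamma>] X(1)[of i] \<delta> by auto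
      show "AE x in M. (\<lambda>i. (\<phi> (\<gamma> + X i) x - \<phi> \<gamma> x) / X i) \<longlonglongrightarrow> \<phi>' \<gamma> x"
      proof (rule AE_I2)
        fix x assume "x \<in> space M"
        then have "((\<lambda>h. (\<phi> (\<gamma> + h) x - \<phi> \<gamma> x) / h) \<longlongrightarrow> \<phi>' \<gamma> x) (at 0)"
          using der[of \<gamma> x] \<delta> unfolding DERIV_def by simp
        then show "(\<lambda>i. (\<phi> (\<gamma> + X i) x - \<phi> \<gamma> x) / X i) \<longlonglongrightarrow> \<phi>' \<gamma> x"
          using X0 X(2) unfolding tendsto_at_iff_sequentially by (auto simp: o_def)
      qed
      show "AE x in M. norm ((\<phi> (\<gamma> + X i) x - \<phi> \<gamma> x) / X i) \<le> B x" for i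
        using lip[OF X(1)] X(2)[of i] by (auto simp: abs_divide divide_le_eq)
    qed (use meas' intB in auto)
    then show "((\<lambda>h. ((\<integral>x. \<phi> (\<gamma> + h) x \<partial>M) - (\<integral>x. \<phi> \<gamma> x \<partial>M)) / h) \<circ> X)
        \<longlonglongrightarrow> (\<integral>x. \<phi>' \<gamma> x \<partial>M)"
      by (simp add: o_def quotient)
  qed
  moreover have "at (0::real) within ball 0 \<delta> = at 0"
    using \<delta> by (intro at_within_open) auto
  ultimately show ?thesis
    unfolding DERIV_def by metis
qed

lemma integrable_exp_neg_square:
  fixes b \<mu> :: real
  assumes b: "0 < b"
  shows "integrable lborel (\<lambda>t. exp (- (b * (t - \<mu>)\<^sup>2)))"
proof -
  define \<sigma> where "\<sigma> = 1 / sqrt (2 * b)"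
  have \<sigma>: "0 < \<sigma>" "\<sigma>\<^sup>2 = 1 / (2 * b)" using b by (simp_all add: \<sigma>_def power_divide)
  have "integrable lborel (\<lambda>t. sqrt (2 * pi * \<sigma>\<^sup>2) * normal_density \<mu> \<sigma> t)"
    using \<sigma> by (intro integrable_mult_right integrable_normal_density) auto
  moreover have "sqrt (2 * pi * \<sigma>\<^sup>2) * normal_density \<mu> \<sigma> t = exp (- (b * (t - \<mu>)\<^sup>2))" for t
    using b \<sigma> by (simp add: normal_density_def field_simps)
  ultimately show ?thesis by simp
qed

lemma integrable_exp_neg_sq_norm:
  fixes s :: "'a::euclidean_space" and b :: real
  assumes b: "0 < b"
  shows "integrable lborel (\<lambda>r. exp (- (b * (norm (r - s))\<^sup>2)))"
proof (rule integrableI_nonneg)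
  define F where "F j t = ennreal (exp (- (b * (t - s \<bullet> j)\<^sup>2)))" for j :: 'a and t
  have product: "ennreal (exp (- (b * (norm (r - s))\<^sup>2))) = (\<Prod>j\<in>Basis. F j (r \<bullet> j))" for r
  proof -
    have "(norm (r - s))\<^sup>2 = (r - s) \<bullet> (r - s)" by (simp add: power2_norm_eq_inner)
    also have "\<dots> = (\<Sum>j\<in>Basis. ((r - s) \<bullet> j) * ((r - s) \<bullet> j))" by (rule euclidean_inner)
    also have "\<dots> = (\<Sum>j\<in>Basis. (r \<bullet> j - s \<bullet> j)\<^sup>2)"
      by (simp add: inner_diff_left power2_eq_square)
    finally have "(norm (r - s))\<^sup>2 = (\<Sum>j\<in>Basis. (r \<bullet> j - s \<bullet> j)\<^sup>2)" .
    then show ?thesis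
      by (simp add: F_def sum_distrib_left exp_sum sum_negf[symmetric] prod_ennreal)
  qed
  have fin: "(\<integral>\<^sup>+t. F j t \<partial>lborel) < \<infinity>" for j
    using integrable_exp_neg_square[OF b, of "s \<bullet> j"] unfolding integrable_iff_bounded F_def by simp
  have "(\<Prod>j\<in>Basis. (\<integral>\<^sup>+t. F j t \<partial>lborel)) \<noteq> top"
    unfolding ennreal_prod_eq_top using fin by (auto simp: less_top)
  then have "(\<Prod>j\<in>Basis. (\<integral>\<^sup>+t. F j t \<partial>lborel)) < \<infinity>"
    by (simp add: less_top)
  also have "(\<Prod>j\<in>Basis. (\<integral>\<^sup>+t. F j t \<partial>lborel)) = (\<integral>\<^sup>+r. (\<Prod>j\<in>Basis. F j (r \<bullet> j)) \<partial>lborel)"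
    by (rule nn_integral_lborel_prod[symmetric]) (auto simp: F_def)
  finally show "(\<integral>\<^sup>+r. ennreal (exp (- (b * (norm (r - s))\<^sup>2))) \<partial>lborel) < \<infinity>"
    by (simp add: product)
qed auto

text \<open>kernel_deriv j n g a is the j-th derivative (j \<le> 2) of g \<mapsto> g powr (n/2) * exp (-g a).\<close>

definition kernel_poly :: "nat \<Rightarrow> nat \<Rightarrow> real \<Rightarrow> real \<Rightarrow> real" where
  "kernel_poly j n g a =
     (if j = 0 then 1 else if j = 1 then real n / (2 * g) - a
      else (real n / (2 * g) - a)\<^sup>2 - real n / (2 * g\<^sup>2))"

definition kernel_deriv :: "nat \<Rightarrow> nat \<Rightarrow> real \<Rightarrow> real \<Rightarrow> real" where
  "kernel_deriv j n g a = g powr (real n / 2) * exp (- (g * a)) * kernel_poly j n g a"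

lemma kernel_deriv_measurable [measurable]: "kernel_deriv j n g \<in> borel_measurable borel"
  unfolding kernel_deriv_def kernel_poly_def by measurable

lemma kernel_deriv_has_real_derivative:
  assumes g: "0 < g" and j: "j \<le> 1"
  shows "((\<lambda>g. kernel_deriv j n g a) has_real_derivative kernel_deriv (Suc j) n g a) (at g)"
proof -
  have gp: "g powr (real n / 2 - 1) = g powr (real n / 2) / g" using g by (simp add: powr_diff)
  consider "j = 0" | "j = 1" using j by linarith
  then show ?thesis
  proof cases
    case 1
    have "((\<lambda>g. g powr (real n / 2) * exp (- (g * a))) has_real_derivative
        (real n / 2 * g powr (real n / 2 - 1) * exp (- (g * a))
         + g powr (real n / 2) * (exp (- (g * a)) * (- a)))) (at g)"
      using g by (auto intro!: derivative_eq_intros has_real_derivative_powr)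
    moreover have "real n / 2 * (g powr (real n / 2) / g) * exp (- (g * a))
        + g powr (real n / 2) * (exp (- (g * a)) * (- a)) = kernel_deriv 1 n g a"
      using g by (simp add: kernel_deriv_def kernel_poly_def field_simps)
    ultimately show ?thesis using 1 by (simp add: kernel_deriv_def kernel_poly_def gp)
  next
    case 2
    have "((\<lambda>g. g powr (real n / 2) * exp (- (g * a)) * (real n / (2 * g) - a)) has_real_derivative
        ((real n / 2 * g powr (real n / 2 - 1) * exp (- (g * a))
          + g powr (real n / 2) * (exp (- (g * a)) * (- a))) * (real n / (2 * g) - a)
         + g powr (real n / 2) * exp (- (g * a)) * (- (real n * 2) / (2 * g)\<^sup>2))) (at g)"
      using g by (auto intro!: derivative_eq_intros has_real_derivative_powr simp: power2_eq_square)
        (simp add: algebra_simps)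
    moreover have "(real n / 2 * g powr (real n / 2 - 1) * exp (- (g * a))
          + g powr (real n / 2) * (exp (- (g * a)) * (- a))) * (real n / (2 * g) - a)
         + g powr (real n / 2) * exp (- (g * a)) * (- (real n * 2) / (2 * g)\<^sup>2)
        = kernel_deriv 2 n g a"
      unfolding gp using g by (simp add: kernel_deriv_def kernel_poly_def field_simps power2_eq_square)
    ultimately show ?thesis using 2 by (simp add: kernel_deriv_def kernel_poly_def)
  qed
qed

lemma kernel_deriv_2_nonneg:
  assumes g: "0 < g" and ga: "real n / 2 + sqrt (real n / 2) \<le> g * a"
  shows "0 \<le> kernel_deriv 2 n g a"
proof -
  define k where "k = real n / 2"
  have "sqrt k \<le> g * a - k" using ga by (simp add: k_def)
  then have "(sqrt k)\<^sup>2 \<le> (g * a - k)\<^sup>2" by (intro power_mono) (auto simp: k_def)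
  then have "0 \<le> ((g * a - k)\<^sup>2 - k) / g\<^sup>2" by (simp add: k_def)
  also have "((g * a - k)\<^sup>2 - k) / g\<^sup>2 = (k / g - a)\<^sup>2 - k / g\<^sup>2"
    using g by (simp add: field_simps power2_eq_square)
  finally show ?thesis by (simp add: kernel_deriv_def kernel_poly_def k_def)
qed

lemma kernel_poly_abs_le:
  assumes g: "0 < g" and a: "0 \<le> a" and j: "j \<le> 2"
  shows "\<bar>kernel_poly j n g a\<bar> \<le> 2 * (1 + real n / g + a)\<^sup>2"
proof -
  define X where "X = real n / g"
  define Y where "Y = X + a"
  have X0: "0 \<le> X" using g by (simp add: X_def)
  then have Y0: "0 \<le> Y" using a by (simp add: Y_def)
  have lin: "\<bar>real n / (2 * g) - a\<bar> \<le> Y"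
    using g a by (simp add: Y_def X_def abs_le_iff field_simps)
  have "real n / (2 * g\<^sup>2) \<le> X\<^sup>2"
  proof -
    have "real n / 2 \<le> real n * real n" by (cases n) (auto simp: field_simps)
    then have "(real n / 2) / g\<^sup>2 \<le> (real n * real n) / g\<^sup>2" by (rule divide_right_mono) simp
    then show ?thesis by (simp add: X_def power2_eq_square)
  qed
  moreover have "(real n / (2 * g) - a)\<^sup>2 \<le> Y\<^sup>2"
    using lin Y0 by (metis abs_le_square_iff abs_of_nonneg)
  moreover have "X\<^sup>2 \<le> (1 + Y)\<^sup>2" "Y\<^sup>2 \<le> (1 + Y)\<^sup>2"
    using X0 Y0 a by (auto simp: Y_def intro!: power_mono)
  moreover have "Y \<le> (1 + Y)\<^sup>2" "1 \<le> (1 + Y)\<^sup>2"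
    using Y0 by (auto simp: power2_eq_square algebra_simps)
  moreover have "0 \<le> real n / (2 * g\<^sup>2)" by simp
  moreover have "0 \<le> (real n / (2 * g) - a)\<^sup>2" by simp
  ultimately have sq: "\<bar>(real n / (2 * g) - a)\<^sup>2 - real n / (2 * g\<^sup>2)\<bar> \<le> 2 * (1 + Y)\<^sup>2"
    by (intro abs_leI) linarith+
  consider "j = 0" | "j = 1" | "j = 2" using j by linarith
  then have "\<bar>kernel_poly j n g a\<bar> \<le> 2 * (1 + Y)\<^sup>2"
  proof cases
    case 1
    then show ?thesis using \<open>1 \<le> (1 + Y)\<^sup>2\<close> by (simp add: kernel_poly_def)
  next
    case 2
    then show ?thesis using lin \<open>Y \<le> (1 + Y)\<^sup>2\<close> by (simp add: kernel_poly_def)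
  next
    case 3
    then show ?thesis using sq by (simp add: kernel_poly_def)
  qed
  then show ?thesis by (simp add: Y_def X_def add.assoc)
qed

lemma near_half_bounds:
  fixes g \<gamma> :: real
  assumes "\<bar>g - \<gamma>\<bar> < \<gamma> / 2"
  shows "\<gamma> / 2 < g" and "g < 2 * \<gamma>"
  using assms unfolding abs_less_iff by linarith+

lemma square_mult_exp_le:
  fixes b \<rho> :: real
  assumes b: "0 < b" and \<rho>: "0 \<le> \<rho>"
  shows "(1 + \<rho>)\<^sup>2 * exp (- (2 * b * \<rho>)) \<le> exp (- (b * \<rho>)) / (min 1 (b / 2))\<^sup>2"
proof -
  define m where "m = min 1 (b / 2)"
  have m0: "0 < m" using b by (simp add: m_def)
  have "m * (1 + \<rho>) \<le> 1 + b * \<rho> / 2"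
    using \<rho> mult_right_mono[of 2 b \<rho>] by (auto simp: m_def min_def algebra_simps)
  also have "\<dots> \<le> exp (b * \<rho> / 2)" by (rule exp_ge_add_one_self)
  finally have "(m * (1 + \<rho>))\<^sup>2 \<le> (exp (b * \<rho> / 2))\<^sup>2" using m0 \<rho> by (intro power_mono) auto
  also have "(exp (b * \<rho> / 2))\<^sup>2 = exp (b * \<rho>)" by (simp add: power2_eq_square exp_add[symmetric])
  finally have "m\<^sup>2 * (1 + \<rho>)\<^sup>2 * exp (- (2 * b * \<rho>)) \<le> exp (b * \<rho>) * exp (- (2 * b * \<rho>))"
    by (simp add: power_mult_distrib)
  also have "exp (b * \<rho>) * exp (- (2 * b * \<rho>)) = exp (- (b * \<rho>))" by (simp add: exp_add[symmetric])
  finally show ?thesis using m0 by (simp add: m_def field_simps)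
qed

text \<open>The bound is uniform for g in a neighbourhood of \<gamma> and \<sigma> in [\<sigma>1, \<sigma>2]; the factor 8
  leaves half of the Gaussian decay at the worst point g = \<gamma>/2, \<sigma> = \<sigma>2 to absorb the
  polynomial factor.\<close>
lemma gaussian_kernel_deriv_bound:
  assumes \<gamma>: "0 < \<gamma>" and \<sigma>1: "0 < \<sigma>1" and \<sigma>12: "\<sigma>1 \<le> \<sigma>2"
  obtains C where "\<And>j g \<rho> \<sigma>. j \<le> 2 \<Longrightarrow> \<bar>g - \<gamma>\<bar> < \<gamma> / 2 \<Longrightarrow> 0 \<le> \<rho> \<Longrightarrow> \<sigma> \<in> {\<sigma>1..\<sigma>2} \<Longrightarrow>
     \<bar>(2 * pi * \<sigma>\<^sup>2) powr (- real n / 2) * kernel_deriv j n g (\<rho> / (2 * \<sigma>\<^sup>2))\<bar>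
       \<le> C * exp (- (\<gamma> / (8 * \<sigma>2\<^sup>2) * \<rho>))"
proof
  define b where "b = \<gamma> / (8 * \<sigma>2\<^sup>2)"
  have b0: "0 < b" using \<gamma> \<sigma>1 \<sigma>12 by (simp add: b_def)
  define c0 where "c0 = (2 * pi * \<sigma>1\<^sup>2) powr (- real n / 2)"
  define G where "G = (2 * \<gamma>) powr (real n / 2)"
  define Q where "Q = 1 + 2 * real n / \<gamma> + 1 / (2 * \<sigma>1\<^sup>2)"
  fix j :: nat and g \<rho> \<sigma> :: real
  assume j: "j \<le> 2" and g: "\<bar>g - \<gamma>\<bar> < \<gamma> / 2" and \<rho>: "0 \<le> \<rho>" and \<sigma>: "\<sigma> \<in> {\<sigma>1..\<sigma>2}"
  have g0: "\<gamma> / 2 < g" "g \<le> 2 * \<gamma>" using near_half_bounds[OF g] by auto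
  define a where "a = \<rho> / (2 * \<sigma>\<^sup>2)"
  have a0: "0 \<le> a" using \<rho> by (simp add: a_def)
  have a_lo: "\<rho> / (2 * \<sigma>2\<^sup>2) \<le> a" and a_hi: "a \<le> \<rho> / (2 * \<sigma>1\<^sup>2)"
    unfolding a_def using \<sigma> \<sigma>1 \<rho> by (auto intro!: divide_left_mono power_mono)
  have c_le: "(2 * pi * \<sigma>\<^sup>2) powr (- real n / 2) \<le> c0"
    unfolding c0_def using \<sigma> \<sigma>1 by (intro powr_mono2') (auto intro!: power_mono)
  have G_le: "g powr (real n / 2) \<le> G"
    unfolding G_def using g0 \<gamma> by (intro powr_mono2) auto
  have "2 * b * \<rho> = (\<gamma> / 2) * (\<rho> / (2 * \<sigma>2\<^sup>2))" by (simp add: b_def field_simps)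
  also have "\<dots> \<le> g * a" using g0 a_lo \<rho> \<gamma> by (intro mult_mono) auto
  finally have e_le: "exp (- (g * a)) \<le> exp (- (2 * b * \<rho>))" by simp
  have "real n / g \<le> 2 * real n / \<gamma>"
    using divide_left_mono[of "\<gamma> / 2" g "real n"] g0 \<gamma> by (simp add: mult.commute)
  moreover have "0 \<le> 1 / (2 * \<sigma>1\<^sup>2)" by simp
  moreover have "1 / (2 * \<sigma>1\<^sup>2) * \<rho> \<le> Q * \<rho>"
    using \<rho> \<gamma> by (intro mult_right_mono) (auto simp: Q_def)
  moreover have "\<rho> / (2 * \<sigma>1\<^sup>2) = 1 / (2 * \<sigma>1\<^sup>2) * \<rho>" "Q * (1 + \<rho>) = Q + Q * \<rho>"
    by (simp_all add: algebra_simps)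
  ultimately have "1 + real n / g + a \<le> Q * (1 + \<rho>)"
    using a_hi Q_def \<open>0 \<le> 1 / (2 * \<sigma>1\<^sup>2)\<close> by linarith
  then have "(1 + real n / g + a)\<^sup>2 \<le> (Q * (1 + \<rho>))\<^sup>2"
    using g0 \<gamma> a0 by (intro power_mono) auto
  then have P_le: "\<bar>kernel_poly j n g a\<bar> \<le> 2 * Q\<^sup>2 * (1 + \<rho>)\<^sup>2"
    using kernel_poly_abs_le[of g a j n] g0 \<gamma> a0 j by (simp add: power_mult_distrib)
  have "\<bar>(2 * pi * \<sigma>\<^sup>2) powr (- real n / 2) * kernel_deriv j n g a\<bar>
      = (2 * pi * \<sigma>\<^sup>2) powr (- real n / 2) * g powr (real n / 2) * exp (- (g * a)) * \<bar>kernel_poly j n g a\<bar>"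
    using g0 \<gamma> by (simp add: kernel_deriv_def abs_mult)
  also have "\<dots> \<le> c0 * G * exp (- (2 * b * \<rho>)) * (2 * Q\<^sup>2 * (1 + \<rho>)\<^sup>2)"
    using c_le G_le e_le P_le by (intro mult_mono) (auto simp: c0_def G_def)
  also have "\<dots> = (2 * c0 * G * Q\<^sup>2) * ((1 + \<rho>)\<^sup>2 * exp (- (2 * b * \<rho>)))" by (simp add: algebra_simps)
  also have "\<dots> \<le> (2 * c0 * G * Q\<^sup>2) * (exp (- (b * \<rho>)) / (min 1 (b / 2))\<^sup>2)"
    using square_mult_exp_le[OF b0 \<rho>] by (intro mult_left_mono) (auto simp: c0_def G_def)
  finally show "\<bar>(2 * pi * \<sigma>\<^sup>2) powr (- real n / 2) * kernel_deriv j n g (\<rho> / (2 * \<sigma>\<^sup>2))\<bar>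
      \<le> (2 * c0 * G * Q\<^sup>2 / (min 1 (b / 2))\<^sup>2) * exp (- (\<gamma> / (8 * \<sigma>2\<^sup>2) * \<rho>))"
    by (simp add: a_def b_def)
qed

definition low_noise_regime :: "nat \<Rightarrow> real \<Rightarrow> real \<Rightarrow> real set" where
  "low_noise_regime n \<sigma>2 d = {\<gamma>. 0 < \<gamma> \<and> (real n + sqrt (2 * real n)) * (\<sigma>2\<^sup>2 / \<gamma>) \<le> d\<^sup>2}"

lemma convex_in_regime_const: "convex_in_regime (\<lambda>_. a) S"
  unfolding convex_in_regime_def by (intro exI[of _ "\<lambda>_. 0"]) auto

lemma convex_in_regime_add:
  assumes "convex_in_regime P S" and "convex_in_regime Q S"
  shows "convex_in_regime (\<lambda>\<gamma>. P \<gamma> + Q \<gamma>) S"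
proof -
  obtain P' P'' Q' Q'' where
    "\<forall>\<gamma>\<in>S. (P has_real_derivative P' \<gamma>) (at \<gamma>) \<and> (P' has_real_derivative P'' \<gamma>) (at \<gamma>) \<and> P'' \<gamma> \<ge> 0"
    "\<forall>\<gamma>\<in>S. (Q has_real_derivative Q' \<gamma>) (at \<gamma>) \<and> (Q' has_real_derivative Q'' \<gamma>) (at \<gamma>) \<and> Q'' \<gamma> \<ge> 0"
    using assms unfolding convex_in_regime_def by blast
  then show ?thesis
    unfolding convex_in_regime_def
    by (intro exI[of _ "\<lambda>\<gamma>. P' \<gamma> + Q' \<gamma>"] exI[of _ "\<lambda>\<gamma>. P'' \<gamma> + Q'' \<gamma>"])
      (auto intro!: DERIV_add)
qed

lemma convex_in_regime_scale:
  assumes "0 \<le> c" and "convex_in_regime P S"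
  shows "convex_in_regime (\<lambda>\<gamma>. c * P \<gamma>) S"
proof -
  obtain P' P'' where
    "\<forall>\<gamma>\<in>S. (P has_real_derivative P' \<gamma>) (at \<gamma>) \<and> (P' has_real_derivative P'' \<gamma>) (at \<gamma>) \<and> P'' \<gamma> \<ge> 0"
    using assms(2) unfolding convex_in_regime_def by blast
  then show ?thesis
    unfolding convex_in_regime_def using assms(1)
    by (intro exI[of _ "\<lambda>\<gamma>. c * P' \<gamma>"] exI[of _ "\<lambda>\<gamma>. c * P'' \<gamma>"]) (auto intro!: DERIV_cmult)
qed

lemma convex_in_regime_sum:
  assumes "finite I" and "\<And>i. i \<in> I \<Longrightarrow> convex_in_regime (P i) S"
  shows "convex_in_regime (\<lambda>\<gamma>. \<Sum>i\<in>I. P i \<gamma>) S"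
  using assms by (induction I rule: finite_induct) (auto intro: convex_in_regime_const convex_in_regime_add)

lemma convex_in_regime_cong:
  assumes "open U" and "S \<subseteq> U" and "\<And>\<gamma>. \<gamma> \<in> U \<Longrightarrow> P \<gamma> = Q \<gamma>" and "convex_in_regime Q S"
  shows "convex_in_regime P S"
proof -
  obtain Q' Q'' where Q:
    "\<forall>\<gamma>\<in>S. (Q has_real_derivative Q' \<gamma>) (at \<gamma>) \<and> (Q' has_real_derivative Q'' \<gamma>) (at \<gamma>) \<and> Q'' \<gamma> \<ge> 0"
    using assms(4) unfolding convex_in_regime_def by blast
  have "(P has_real_derivative Q' \<gamma>) (at \<gamma>)" if "\<gamma> \<in> S" for \<gamma>
  proof -
    have "\<gamma> \<in> U" using that assms(2) by blast
    then have "eventually (\<lambda>x. P x = Q x) (nhds \<gamma>)"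
      using eventually_nhds_in_open[OF assms(1)] assms(3) by (blast intro: eventually_mono)
    then show ?thesis using Q that DERIV_cong_ev[OF refl _ refl] by blast
  qed
  then show ?thesis using Q unfolding convex_in_regime_def by blast
qed

lemma convex_in_regime_ser:
  assumes "\<And>i. i < M \<Longrightarrow> 0 \<le> \<pi> i"
    and "\<And>i. i < M \<Longrightarrow> convex_in_regime (\<lambda>\<gamma>. 1 - prob_in f (s i) (\<Omega> i) \<gamma>) S"
  shows "convex_in_regime (ser f M \<pi> s \<Omega>) S"
  unfolding ser_def using assms by (intro convex_in_regime_sum convex_in_regime_scale) auto

lemma convex_in_regime_ber:
  assumes "0 < M" and "\<And>i. i < M \<Longrightarrow> 0 \<le> \<pi> i"
    and "\<And>i j. i < M \<Longrightarrow> j < M \<Longrightarrow> i \<noteq> j \<Longrightarrow> convex_in_regime (pep f s \<Omega> i j) S"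
  shows "convex_in_regime (ber f M \<pi> lab s \<Omega>) S"
proof -
  have "0 \<le> log 2 (real M)" using assms(1) by simp
  then have "convex_in_regime
      (\<lambda>\<gamma>. real (hamming (lab i) (lab j)) / log 2 (real M) * \<pi> i * pep f s \<Omega> i j \<gamma>) S"
    if "i < M" "j \<in> {..<M} - {i}" for i j
    using assms(2,3)[of i] that by (intro convex_in_regime_scale) auto
  then show ?thesis
    unfolding ber_def by (intro convex_in_regime_sum) auto
qed

text \<open>A region without frontier is empty or everything; infdist to the empty set is 0.\<close>
lemma center_convex_infdist_frontier_le_dist:
  fixes c r :: "real ^ 'n"
  assumes cc: "center_convex c A" and e: "e \<le> infdist c (frontier A)" and r: "r \<notin> A"
  shows "e \<le> dist r c"
proof (cases "frontier A = {}")
  case True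
  then have "e \<le> 0" using e by (simp add: infdist_def)
  then show ?thesis using zero_le_dist[of r c] by linarith
next
  case False
  then obtain x where "x \<in> A" by (auto simp: frontier_eq_empty)
  then have "c \<in> A" using cc unfolding center_convex_def by auto
  then have "closed_segment c r \<inter> frontier A \<noteq> {}"
    using r by (intro connected_Int_frontier) auto
  then obtain z where z: "z \<in> closed_segment c r" "z \<in> frontier A" by auto
  have "e \<le> dist c z" using e infdist_le[OF z(2), of c] by linarith
  also have "\<dots> \<le> dist c r" using dist_in_closed_segment[OF z(1)] by (simp add: dist_commute)
  finally show ?thesis by (simp add: dist_commute)
qed

lemma dmin_nonneg: "0 < M \<Longrightarrow> 0 \<le> dmin M s \<Omega>"
  unfolding dmin_def by (subst Min_ge_iff) (auto simp: infdist_nonneg)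

lemma dmin_le_dist_outside:
  assumes "k < M" and "center_convex (s k) (\<Omega> k)" and "r \<notin> \<Omega> k"
  shows "dmin M s \<Omega> \<le> dist r (s k)"
proof (rule center_convex_infdist_frontier_le_dist[OF assms(2) _ assms(3)])
  show "dmin M s \<Omega> \<le> infdist (s k) (frontier (\<Omega> k))"
    unfolding dmin_def using assms(1) by (intro Min_le) auto
qed

locale scale_mixture =
  fixes f :: "real \<Rightarrow> real" and \<sigma>1 \<sigma>2 :: real
  assumes \<sigma>1_pos: "0 < \<sigma>1" and \<sigma>1_le_\<sigma>2: "\<sigma>1 \<le> \<sigma>2"
    and f_nonneg: "\<And>\<sigma>. 0 \<le> f \<sigma>" and f_integrable: "integrable lborel f"
    and f_support: "\<And>\<sigma>. \<sigma> \<notin> {\<sigma>1..\<sigma>2} \<Longrightarrow> f \<sigma> = 0"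
begin

lemma f_measurable [measurable]: "f \<in> borel_measurable borel"
  using borel_measurable_integrable[OF f_integrable] by simp

text \<open>mixture_deriv j n \<gamma> \<rho> is the j-th \<gamma>-derivative of \<gamma> powr (n/2) times the noise density at
  any point x with |x|^2 = \<gamma> \<rho>, i.e. of the density of r at squared distance \<rho> from the sent
  point.\<close>
definition mixture_deriv :: "nat \<Rightarrow> nat \<Rightarrow> real \<Rightarrow> real \<Rightarrow> real" where
  "mixture_deriv j n g \<rho> =
     (\<integral>\<sigma>. (2 * pi * \<sigma>\<^sup>2) powr (- real n / 2) * kernel_deriv j n g (\<rho> / (2 * \<sigma>\<^sup>2)) * f \<sigma> \<partial>lborel)"

lemma mixture_deriv_measurable [measurable]: "(\<lambda>\<rho>. mixture_deriv j n g \<rho>) \<in> borel_measurable borel"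
  unfolding mixture_deriv_def by measurable

lemma mixture_integrand_bound:
  assumes "0 < \<gamma>"
  obtains C where "\<And>j g \<rho> \<sigma>. j \<le> 2 \<Longrightarrow> \<bar>g - \<gamma>\<bar> < \<gamma> / 2 \<Longrightarrow> 0 \<le> \<rho> \<Longrightarrow>
     \<bar>(2 * pi * \<sigma>\<^sup>2) powr (- real n / 2) * kernel_deriv j n g (\<rho> / (2 * \<sigma>\<^sup>2)) * f \<sigma>\<bar>
       \<le> C * exp (- (\<gamma> / (8 * \<sigma>2\<^sup>2) * \<rho>)) * f \<sigma>"
proof -
  obtain C where C: "\<And>j g \<rho> \<sigma>. j \<le> 2 \<Longrightarrow> \<bar>g - \<gamma>\<bar> < \<gamma> / 2 \<Longrightarrow> 0 \<le> \<rho> \<Longrightarrow> \<sigma> \<in> {\<sigma>1..\<sigma>2} \<Longrightarrow>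
     \<bar>(2 * pi * \<sigma>\<^sup>2) powr (- real n / 2) * kernel_deriv j n g (\<rho> / (2 * \<sigma>\<^sup>2))\<bar>
       \<le> C * exp (- (\<gamma> / (8 * \<sigma>2\<^sup>2) * \<rho>))"
    using gaussian_kernel_deriv_bound[OF assms \<sigma>1_pos \<sigma>1_le_\<sigma>2] by blast
  show ?thesis
  proof (rule that)
    fix j g \<rho> \<sigma> assume *: "j \<le> (2::nat)" "\<bar>g - \<gamma>\<bar> < \<gamma> / 2" "0 \<le> (\<rho>::real)"
    show "\<bar>(2 * pi * \<sigma>\<^sup>2) powr (- real n / 2) * kernel_deriv j n g (\<rho> / (2 * \<sigma>\<^sup>2)) * f \<sigma>\<bar>
        \<le> C * exp (- (\<gamma> / (8 * \<sigma>2\<^sup>2) * \<rho>)) * f \<sigma>"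
    proof (cases "\<sigma> \<in> {\<sigma>1..\<sigma>2}")
      case True
      then show ?thesis
        using C[OF * True] f_nonneg[of \<sigma>] by (simp add: abs_mult mult_right_mono)
    qed (simp add: f_support)
  qed
qed

lemma integrable_mixture_integrand:
  assumes g: "0 < g" and \<rho>: "0 \<le> \<rho>" and j: "j \<le> 2"
  shows "integrable lborel
           (\<lambda>\<sigma>. (2 * pi * \<sigma>\<^sup>2) powr (- real n / 2) * kernel_deriv j n g (\<rho> / (2 * \<sigma>\<^sup>2)) * f \<sigma>)"
proof -
  obtain C where C: "\<And>j g' \<rho> \<sigma>. j \<le> 2 \<Longrightarrow> \<bar>g' - g\<bar> < g / 2 \<Longrightarrow> 0 \<le> \<rho> \<Longrightarrow>
     \<bar>(2 * pi * \<sigma>\<^sup>2) powr (- real n / 2) * kernel_deriv j n g' (\<rho> / (2 * \<sigma>\<^sup>2)) * f \<sigma>\<bar>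
       \<le> C * exp (- (g / (8 * \<sigma>2\<^sup>2) * \<rho>)) * f \<sigma>"
    using mixture_integrand_bound[OF g] by blast
  show ?thesis
  proof (rule Bochner_Integration.integrable_bound)
    show "integrable lborel (\<lambda>\<sigma>. C * exp (- (g / (8 * \<sigma>2\<^sup>2) * \<rho>)) * f \<sigma>)"
      using f_integrable by simp
    show "AE \<sigma> in lborel. norm ((2 * pi * \<sigma>\<^sup>2) powr (- real n / 2) * kernel_deriv j n g (\<rho> / (2 * \<sigma>\<^sup>2)) * f \<sigma>)
        \<le> norm (C * exp (- (g / (8 * \<sigma>2\<^sup>2) * \<rho>)) * f \<sigma>)"
    proof (rule AE_I2)
      fix \<sigma>
      show "norm ((2 * pi * \<sigma>\<^sup>2) powr (- real n / 2) * kernel_deriv j n g (\<rho> / (2 * \<sigma>\<^sup>2)) * f \<sigma>)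
          \<le> norm (C * exp (- (g / (8 * \<sigma>2\<^sup>2) * \<rho>)) * f \<sigma>)"
        using C[of j g \<rho> \<sigma>] j g \<rho> abs_ge_self[of "C * exp (- (g / (8 * \<sigma>2\<^sup>2) * \<rho>)) * f \<sigma>"]
        unfolding real_norm_def by linarith
    qed
  qed measurable
qed

lemma mixture_deriv_bound:
  assumes "0 < \<gamma>"
  obtains C where "\<And>j g \<rho>. j \<le> 2 \<Longrightarrow> \<bar>g - \<gamma>\<bar> < \<gamma> / 2 \<Longrightarrow> 0 \<le> \<rho> \<Longrightarrow>
     \<bar>mixture_deriv j n g \<rho>\<bar> \<le> C * exp (- (\<gamma> / (8 * \<sigma>2\<^sup>2) * \<rho>))"
proof -
  obtain C where C: "\<And>j g \<rho> \<sigma>. j \<le> 2 \<Longrightarrow> \<bar>g - \<gamma>\<bar> < \<gamma> / 2 \<Longrightarrow> 0 \<le> \<rho> \<Longrightarrow>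
     \<bar>(2 * pi * \<sigma>\<^sup>2) powr (- real n / 2) * kernel_deriv j n g (\<rho> / (2 * \<sigma>\<^sup>2)) * f \<sigma>\<bar>
       \<le> C * exp (- (\<gamma> / (8 * \<sigma>2\<^sup>2) * \<rho>)) * f \<sigma>"
    using mixture_integrand_bound[OF assms] by blast
  show ?thesis
  proof (rule that)
    fix j g \<rho> assume *: "j \<le> (2::nat)" "\<bar>g - \<gamma>\<bar> < \<gamma> / 2" "0 \<le> (\<rho>::real)"
    have "0 < g" using near_half_bounds(1)[OF *(2)] assms by simp
    define E where "E = C * exp (- (\<gamma> / (8 * \<sigma>2\<^sup>2) * \<rho>))"
    let ?\<phi> = "\<lambda>\<sigma>. (2 * pi * \<sigma>\<^sup>2) powr (- real n / 2) * kernel_deriv j n g (\<rho> / (2 * \<sigma>\<^sup>2)) * f \<sigma>"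
    have "\<bar>mixture_deriv j n g \<rho>\<bar> \<le> (\<integral>\<sigma>. \<bar>?\<phi> \<sigma>\<bar> \<partial>lborel)"
      unfolding mixture_deriv_def using integral_norm_bound[of lborel ?\<phi>] by (simp only: real_norm_def)
    also have "\<dots> \<le> (\<integral>\<sigma>. E * f \<sigma> \<partial>lborel)"
    proof (rule integral_mono)
      show "integrable lborel (\<lambda>\<sigma>. \<bar>?\<phi> \<sigma>\<bar>)"
        using integrable_mixture_integrand[OF \<open>0 < g\<close> *(3,1)] by (rule integrable_abs)
      show "integrable lborel (\<lambda>\<sigma>. E * f \<sigma>)" using f_integrable by simp
      show "\<bar>?\<phi> \<sigma>\<bar> \<le> E * f \<sigma>" for \<sigma> using C[OF *] unfolding E_def .
    qed
    also have "\<dots> = (C * integral\<^sup>L lborel f) * exp (- (\<gamma> / (8 * \<sigma>2\<^sup>2) * \<rho>))"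
      by (simp add: E_def)
    finally show "\<bar>mixture_deriv j n g \<rho>\<bar> \<le> (C * integral\<^sup>L lborel f) * exp (- (\<gamma> / (8 * \<sigma>2\<^sup>2) * \<rho>))" .
  qed
qed

lemma mixture_deriv_has_real_derivative:
  assumes \<gamma>: "0 < \<gamma>" and \<rho>: "0 \<le> \<rho>" and j: "j \<le> 1"
  shows "((\<lambda>g. mixture_deriv j n g \<rho>) has_real_derivative mixture_deriv (Suc j) n \<gamma> \<rho>) (at \<gamma>)"
proof -
  obtain C where C: "\<And>j g \<rho> \<sigma>. j \<le> 2 \<Longrightarrow> \<bar>g - \<gamma>\<bar> < \<gamma> / 2 \<Longrightarrow> 0 \<le> \<rho> \<Longrightarrow>
     \<bar>(2 * pi * \<sigma>\<^sup>2) powr (- real n / 2) * kernel_deriv j n g (\<rho> / (2 * \<sigma>\<^sup>2)) * f \<sigma>\<bar>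
       \<le> C * exp (- (\<gamma> / (8 * \<sigma>2\<^sup>2) * \<rho>)) * f \<sigma>"
    using mixture_integrand_bound[OF \<gamma>] by blast
  show ?thesis
    unfolding mixture_deriv_def
  proof (rule has_real_derivative_integral_dominated[where \<delta>="\<gamma> / 2"
        and B="\<lambda>\<sigma>. C * exp (- (\<gamma> / (8 * \<sigma>2\<^sup>2) * \<rho>)) * f \<sigma>"])
    show "integrable lborel (\<lambda>\<sigma>. (2 * pi * \<sigma>\<^sup>2) powr (- real n / 2) * kernel_deriv j n \<gamma> (\<rho> / (2 * \<sigma>\<^sup>2)) * f \<sigma>)"
      using integrable_mixture_integrand[OF \<gamma> \<rho>] j by simp
    fix g \<sigma> assume g: "\<bar>g - \<gamma>\<bar> < \<gamma> / 2"
    then have "0 < g" using near_half_bounds(1)[OF g] by linarith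
    then show "((\<lambda>g. (2 * pi * \<sigma>\<^sup>2) powr (- real n / 2) * kernel_deriv j n g (\<rho> / (2 * \<sigma>\<^sup>2)) * f \<sigma>)
        has_real_derivative
        (2 * pi * \<sigma>\<^sup>2) powr (- real n / 2) * kernel_deriv (Suc j) n g (\<rho> / (2 * \<sigma>\<^sup>2)) * f \<sigma>) (at g)"
      using j by (intro DERIV_cmult_right DERIV_cmult kernel_deriv_has_real_derivative)
    show "\<bar>(2 * pi * \<sigma>\<^sup>2) powr (- real n / 2) * kernel_deriv (Suc j) n g (\<rho> / (2 * \<sigma>\<^sup>2)) * f \<sigma>\<bar>
        \<le> C * exp (- (\<gamma> / (8 * \<sigma>2\<^sup>2) * \<rho>)) * f \<sigma>"
      using C[of "Suc j" g \<rho> \<sigma>] j g \<rho> by simp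
  qed (use \<gamma> f_integrable in auto)
qed

lemma mixture_deriv_2_nonneg:
  assumes \<gamma>: "0 < \<gamma>" and regime: "(real n + sqrt (2 * real n)) * \<sigma>2\<^sup>2 \<le> \<gamma> * \<rho>"
  shows "0 \<le> mixture_deriv 2 n \<gamma> \<rho>"
  unfolding mixture_deriv_def
proof (rule integral_nonneg_AE, rule AE_I2)
  fix \<sigma> :: real
  show "0 \<le> (2 * pi * \<sigma>\<^sup>2) powr (- real n / 2) * kernel_deriv 2 n \<gamma> (\<rho> / (2 * \<sigma>\<^sup>2)) * f \<sigma>"
  proof (cases "\<sigma> \<in> {\<sigma>1..\<sigma>2}")
    case True
    then have \<sigma>: "0 < \<sigma>" "\<sigma>\<^sup>2 \<le> \<sigma>2\<^sup>2" using \<sigma>1_pos by (auto intro!: power_mono)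
    have "sqrt (2 * real n) = 2 * sqrt (real n / 2)"
      using real_sqrt_mult[of 4 "real n / 2"] by simp
    moreover have "(real n + sqrt (2 * real n)) * \<sigma>\<^sup>2 \<le> \<gamma> * \<rho>"
      using regime \<sigma>(2) order_trans[OF mult_left_mono] by fastforce
    ultimately have "real n / 2 + sqrt (real n / 2) \<le> \<gamma> * (\<rho> / (2 * \<sigma>\<^sup>2))"
      using \<sigma>(1) by (simp add: field_simps)
    then show ?thesis
      using kernel_deriv_2_nonneg[OF \<gamma>] f_nonneg[of \<sigma>] by simp
  qed (simp add: f_support)
qed

definition prob_in_deriv :: "nat \<Rightarrow> real ^ 'n \<Rightarrow> (real ^ 'n) set \<Rightarrow> real \<Rightarrow> real" where
  "prob_in_deriv j s A g = (\<integral>r. indicator A r * mixture_deriv j CARD('n) g ((norm (r - s))\<^sup>2) \<partial>lborel)"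

lemma prob_in_deriv_integrand_bound:
  fixes s :: "real ^ 'n"
  assumes \<gamma>: "0 < \<gamma>"
  obtains B where "integrable lborel B"
    and "\<And>j g r. j \<le> 2 \<Longrightarrow> \<bar>g - \<gamma>\<bar> < \<gamma> / 2 \<Longrightarrow>
           \<bar>indicator A r * mixture_deriv j CARD('n) g ((norm (r - s))\<^sup>2)\<bar> \<le> B r"
proof -
  obtain C where C: "\<And>j g \<rho>. j \<le> 2 \<Longrightarrow> \<bar>g - \<gamma>\<bar> < \<gamma> / 2 \<Longrightarrow> 0 \<le> \<rho> \<Longrightarrow>
     \<bar>mixture_deriv j CARD('n) g \<rho>\<bar> \<le> C * exp (- (\<gamma> / (8 * \<sigma>2\<^sup>2) * \<rho>))"
    using mixture_deriv_bound[OF \<gamma>] by blast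
  have "\<bar>mixture_deriv 0 CARD('n) \<gamma> 0\<bar> \<le> C" using C[of 0 \<gamma> 0] \<gamma> by simp
  then have "0 \<le> C" by (rule order_trans[OF abs_ge_zero])
  show ?thesis
  proof (rule that)
    show "integrable lborel (\<lambda>r. C * exp (- (\<gamma> / (8 * \<sigma>2\<^sup>2) * (norm (r - s))\<^sup>2)))"
      using \<gamma> \<sigma>1_pos \<sigma>1_le_\<sigma>2
      by (intro integrable_mult_right integrable_exp_neg_sq_norm) simp
    fix j g r assume "j \<le> (2::nat)" "\<bar>g - \<gamma>\<bar> < \<gamma> / 2"
    then show "\<bar>indicator A r * mixture_deriv j CARD('n) g ((norm (r - s))\<^sup>2)\<bar>
        \<le> C * exp (- (\<gamma> / (8 * \<sigma>2\<^sup>2) * (norm (r - s))\<^sup>2))"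
      using C[of j g "(norm (r - s))\<^sup>2"] \<open>0 \<le> C\<close> by (cases "r \<in> A") auto
  qed
qed

lemma integrable_prob_in_deriv_integrand:
  fixes s :: "real ^ 'n"
  assumes A: "A \<in> sets lborel" and g: "0 < g" and j: "j \<le> 2"
  shows "integrable lborel (\<lambda>r. indicator A r * mixture_deriv j CARD('n) g ((norm (r - s))\<^sup>2))"
proof -
  obtain B where B: "integrable lborel B"
    "\<And>j g' r. j \<le> 2 \<Longrightarrow> \<bar>g' - g\<bar> < g / 2 \<Longrightarrow>
       \<bar>indicator A r * mixture_deriv j CARD('n) g' ((norm (r - s))\<^sup>2)\<bar> \<le> B r"
    using prob_in_deriv_integrand_bound[OF g] by blast
  show ?thesis
  proof (rule Bochner_Integration.integrable_bound[OF B(1)])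
    show "AE r in lborel. norm (indicator A r * mixture_deriv j CARD('n) g ((norm (r - s))\<^sup>2)) \<le> norm (B r)"
    proof (rule AE_I2)
      fix r
      show "norm (indicator A r * mixture_deriv j CARD('n) g ((norm (r - s))\<^sup>2)) \<le> norm (B r)"
        using B(2)[OF j, of g r] g abs_ge_self[of "B r"] unfolding real_norm_def by simp
    qed
  qed (use A in measurable)
qed

lemma prob_in_deriv_has_real_derivative:
  fixes s :: "real ^ 'n"
  assumes A: "A \<in> sets lborel" and \<gamma>: "0 < \<gamma>" and j: "j \<le> 1"
  shows "(prob_in_deriv j s A has_real_derivative prob_in_deriv (Suc j) s A \<gamma>) (at \<gamma>)"
proof -
  obtain B where B: "integrable lborel B"
    "\<And>j g r. j \<le> 2 \<Longrightarrow> \<bar>g - \<gamma>\<bar> < \<gamma> / 2 \<Longrightarrow>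
       \<bar>indicator A r * mixture_deriv j CARD('n) g ((norm (r - s))\<^sup>2)\<bar> \<le> B r"
    using prob_in_deriv_integrand_bound[OF \<gamma>] by blast
  show ?thesis
    unfolding prob_in_deriv_def[abs_def]
  proof (rule has_real_derivative_integral_dominated[where \<delta>="\<gamma> / 2" and B=B])
    show "integrable lborel (\<lambda>r. indicator A r * mixture_deriv j CARD('n) \<gamma> ((norm (r - s))\<^sup>2))"
      using integrable_prob_in_deriv_integrand[OF A \<gamma>] j by simp
    fix g r assume g: "\<bar>g - \<gamma>\<bar> < \<gamma> / 2"
    then have "0 < g" using near_half_bounds(1)[OF g] \<gamma> by simp
    then show "((\<lambda>g. indicator A r * mixture_deriv j CARD('n) g ((norm (r - s))\<^sup>2)) has_real_derivative
        indicator A r * mixture_deriv (Suc j) CARD('n) g ((norm (r - s))\<^sup>2)) (at g)"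
      using j by (intro DERIV_cmult mixture_deriv_has_real_derivative) simp_all
    show "\<bar>indicator A r * mixture_deriv (Suc j) CARD('n) g ((norm (r - s))\<^sup>2)\<bar> \<le> B r"
      using B(2)[of "Suc j" g r] j g by simp
  qed (use \<gamma> A B(1) in auto)
qed

lemma prob_in_eq_prob_in_deriv:
  fixes s :: "real ^ 'n"
  assumes \<gamma>: "0 < \<gamma>"
  shows "prob_in f s A \<gamma> = prob_in_deriv 0 s A \<gamma>"
proof -
  define n where "n = CARD('n)"
  have "sqrt \<gamma> ^ n * noise_density f (sqrt \<gamma> *\<^sub>R x) = mixture_deriv 0 n \<gamma> ((norm x)\<^sup>2)"
    for x :: "real ^ 'n"
  proof -
    have "sqrt \<gamma> ^ n * noise_density f (sqrt \<gamma> *\<^sub>R x)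
        = (\<integral>\<sigma>. sqrt \<gamma> ^ n * (indicator {0<..} \<sigma> *\<^sub>R ((2 * pi * \<sigma>\<^sup>2) powr (- real n / 2) *
             exp (- (norm (sqrt \<gamma> *\<^sub>R x))\<^sup>2 / (2 * \<sigma>\<^sup>2)) * f \<sigma>)) \<partial>lborel)"
      unfolding noise_density_def set_lebesgue_integral_def n_def by simp
    also have "\<dots> = mixture_deriv 0 n \<gamma> ((norm x)\<^sup>2)"
      unfolding mixture_deriv_def
    proof (rule Bochner_Integration.integral_cong[OF refl])
      fix \<sigma> :: real
      have "sqrt \<gamma> ^ n = \<gamma> powr (real n / 2)"
        using \<gamma> by (simp add: powr_half_sqrt[symmetric] powr_power)
      moreover have "(norm (sqrt \<gamma> *\<^sub>R x))\<^sup>2 = \<gamma> * (norm x)\<^sup>2"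
        using \<gamma> by (simp add: power_mult_distrib)
      moreover have "f \<sigma> = 0" if "\<not> 0 < \<sigma>" using that f_support \<sigma>1_pos by force
      ultimately show "sqrt \<gamma> ^ n * (indicator {0<..} \<sigma> *\<^sub>R ((2 * pi * \<sigma>\<^sup>2) powr (- real n / 2) *
             exp (- (norm (sqrt \<gamma> *\<^sub>R x))\<^sup>2 / (2 * \<sigma>\<^sup>2)) * f \<sigma>))
          = (2 * pi * \<sigma>\<^sup>2) powr (- real n / 2) * kernel_deriv 0 n \<gamma> ((norm x)\<^sup>2 / (2 * \<sigma>\<^sup>2)) * f \<sigma>"
        by (cases "0 < \<sigma>") (simp_all add: kernel_deriv_def kernel_poly_def)
    qed
    finally show ?thesis .
  qed
  then show ?thesis
    unfolding prob_in_def set_lebesgue_integral_def prob_in_deriv_def n_def by simp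
qed

lemma prob_in_deriv_2_nonneg:
  fixes s :: "real ^ 'n"
  assumes \<gamma>: "0 < \<gamma>" and d: "0 \<le> d" and far: "\<And>r. r \<in> A \<Longrightarrow> d \<le> dist r s"
    and regime: "(real CARD('n) + sqrt (2 * real CARD('n))) * (\<sigma>2\<^sup>2 / \<gamma>) \<le> d\<^sup>2"
  shows "0 \<le> prob_in_deriv 2 s A \<gamma>"
  unfolding prob_in_deriv_def
proof (rule integral_nonneg_AE, rule AE_I2)
  fix r :: "real ^ 'n"
  show "0 \<le> indicator A r * mixture_deriv 2 CARD('n) \<gamma> ((norm (r - s))\<^sup>2)"
  proof (cases "r \<in> A")
    case True
    have "d\<^sup>2 \<le> (norm (r - s))\<^sup>2"
      using far[OF True] d by (intro power_mono) (auto simp: dist_norm)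
    then have "\<gamma> * d\<^sup>2 \<le> \<gamma> * (norm (r - s))\<^sup>2" using \<gamma> by simp
    moreover have "(real CARD('n) + sqrt (2 * real CARD('n))) * \<sigma>2\<^sup>2 \<le> \<gamma> * d\<^sup>2"
      using regime \<gamma> by (simp add: field_simps)
    ultimately have "(real CARD('n) + sqrt (2 * real CARD('n))) * \<sigma>2\<^sup>2 \<le> \<gamma> * (norm (r - s))\<^sup>2"
      by linarith
    then show ?thesis using True mixture_deriv_2_nonneg[OF \<gamma>] by simp
  qed simp
qed

lemma prob_in_UNIV:
  fixes s :: "real ^ 'n"
  assumes \<gamma>: "0 < \<gamma>"
  shows "prob_in f s UNIV \<gamma> = (\<integral>x. noise_density f (x :: real ^ 'n) \<partial>lborel)"
proof -
  have [measurable]: "noise_density f \<in> borel_measurable borel"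
    unfolding noise_density_def[abs_def] set_lebesgue_integral_def by measurable
  define c where "c = 1 / sqrt \<gamma>"
  have c0: "c \<noteq> 0" using \<gamma> by (simp add: c_def)
  define F where "F r = sqrt \<gamma> ^ CARD('n) * noise_density f (sqrt \<gamma> *\<^sub>R (r - s))" for r :: "real ^ 'n"
  have [measurable]: "F \<in> borel_measurable borel" unfolding F_def[abs_def] by measurable
  have "prob_in f s UNIV \<gamma> = integral\<^sup>L lborel F"
    unfolding prob_in_def set_lebesgue_integral_def F_def by simp
  also have "\<dots> = integral\<^sup>L (density (distr lborel borel (\<lambda>x. s + c *\<^sub>R x)) (\<lambda>_. \<bar>c\<bar> ^ DIM(real ^ 'n))) F"
    by (simp only: lborel_affine[OF c0, of s, symmetric])
  also have "\<dots> = (\<integral>x. \<bar>c\<bar> ^ DIM(real ^ 'n) *\<^sub>R F (s + c *\<^sub>R (x :: real ^ 'n)) \<partial>lborel)"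
    by (simp add: integral_density integral_distr)
  also have "\<dots> = (\<integral>x. noise_density f (x :: real ^ 'n) \<partial>lborel)"
  proof -
    have "\<bar>c\<bar> ^ CARD('n) * sqrt \<gamma> ^ CARD('n) = 1"
      using \<gamma> by (simp add: c_def power_mult_distrib[symmetric])
    moreover have "sqrt \<gamma> *\<^sub>R (s + c *\<^sub>R x - s) = x" for x :: "real ^ 'n" using \<gamma> by (simp add: c_def)
    ultimately show ?thesis by (simp add: F_def mult.assoc[symmetric])
  qed
  finally show ?thesis .
qed

lemma prob_in_Compl:
  fixes s :: "real ^ 'n"
  assumes A: "A \<in> sets lborel" and \<gamma>: "0 < \<gamma>"
  shows "prob_in f s A \<gamma> = prob_in f s UNIV \<gamma> - prob_in f s (- A) \<gamma>"
proof -
  let ?h = "\<lambda>r. mixture_deriv 0 CARD('n) \<gamma> ((norm (r - s))\<^sup>2)"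
  have "prob_in_deriv 0 s UNIV \<gamma> = (\<integral>r. indicator A r * ?h r + indicator (- A) r * ?h r \<partial>lborel)"
    unfolding prob_in_deriv_def by (rule Bochner_Integration.integral_cong) (auto split: split_indicator)
  also have "\<dots> = prob_in_deriv 0 s A \<gamma> + prob_in_deriv 0 s (- A) \<gamma>"
    unfolding prob_in_deriv_def using A \<gamma>
    by (intro Bochner_Integration.integral_add integrable_prob_in_deriv_integrand) auto
  finally show ?thesis using \<gamma> by (simp add: prob_in_eq_prob_in_deriv)
qed

lemma convex_in_regime_prob_in:
  fixes s :: "real ^ 'n"
  assumes A: "A \<in> sets lborel" and d: "0 \<le> d" and far: "\<And>r. r \<in> A \<Longrightarrow> d \<le> dist r s"
  shows "convex_in_regime (prob_in f s A) (low_noise_regime CARD('n) \<sigma>2 d)"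
proof (rule convex_in_regime_cong[where U="{0<..}"])
  show "convex_in_regime (prob_in_deriv 0 s A) (low_noise_regime CARD('n) \<sigma>2 d)"
    unfolding convex_in_regime_def low_noise_regime_def
    using prob_in_deriv_has_real_derivative[OF A] prob_in_deriv_2_nonneg[OF _ d far]
    by (intro exI[of _ "prob_in_deriv 1 s A"] exI[of _ "prob_in_deriv 2 s A"])
      (auto simp: numeral_2_eq_2)
qed (auto simp: prob_in_eq_prob_in_deriv low_noise_regime_def)

lemma convex_in_regime_one_minus_prob_in:
  fixes s :: "real ^ 'n"
  assumes A: "A \<in> sets lborel" and d: "0 \<le> d" and far: "\<And>r. r \<notin> A \<Longrightarrow> d \<le> dist r s"
  shows "convex_in_regime (\<lambda>\<gamma>. 1 - prob_in f s A \<gamma>) (low_noise_regime CARD('n) \<sigma>2 d)"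
proof (rule convex_in_regime_cong[where U="{0<..}"])
  let ?G = "\<integral>x. noise_density f (x :: real ^ 'n) \<partial>lborel"
  show "convex_in_regime (\<lambda>\<gamma>. (1 - ?G) + prob_in f s (- A) \<gamma>) (low_noise_regime CARD('n) \<sigma>2 d)"
    using A d far by (intro convex_in_regime_add convex_in_regime_const convex_in_regime_prob_in) auto
  show "1 - prob_in f s A \<gamma> = (1 - ?G) + prob_in f s (- A) \<gamma>" if "\<gamma> \<in> {0<..}" for \<gamma>
    using that prob_in_Compl[OF A, of \<gamma> s] prob_in_UNIV[of \<gamma> s] by simp
qed (auto simp: low_noise_regime_def)

end

theorem theorem10:
  fixes f :: "real \<Rightarrow> real" and \<sigma>1 \<sigma>2 :: real
    and M :: nat and \<pi> :: "nat \<Rightarrow> real" and lab :: "nat \<Rightarrow> bool list" and m :: nat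
    and s :: "nat \<Rightarrow> real ^ 'n" and \<Omega> :: "nat \<Rightarrow> (real ^ 'n) set"
  assumes "0 < \<sigma>1" and "\<sigma>1 \<le> \<sigma>2"
    and "f \<in> borel_measurable lborel" and "\<And>\<sigma>. f \<sigma> \<ge> 0"
    and "integrable lborel f" and "integral\<^sup>L lborel f = 1"
    and "\<And>\<sigma>. \<sigma> \<notin> {\<sigma>1..\<sigma>2} \<Longrightarrow> f \<sigma> = 0"
    and "0 < M"
    and "\<And>k. k < M \<Longrightarrow> \<pi> k \<ge> 0" and "(\<Sum>k<M. \<pi> k) = 1"
    and "\<And>k. k < M \<Longrightarrow> length (lab k) = m"
    and "\<And>k. k < M \<Longrightarrow> \<Omega> k \<in> sets lborel"
    and "\<And>i j. i < M \<Longrightarrow> j < M \<Longrightarrow> i \<noteq> j \<Longrightarrow> \<Omega> i \<inter> \<Omega> j = {}"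
    and "\<And>k. k < M \<Longrightarrow> center_convex (s k) (\<Omega> k)"
  defines "S \<equiv> {\<gamma>::real. 0 < \<gamma> \<and>
                  (dmin M s \<Omega>)\<^sup>2 \<ge> (real CARD('n) + sqrt (2 * real CARD('n))) * (\<sigma>2\<^sup>2 / \<gamma>)}"
  shows "(\<forall>i<M. \<forall>j<M. i \<noteq> j \<longrightarrow> convex_in_regime (pep f s \<Omega> i j) S)
         \<and> convex_in_regime (ser f M \<pi> s \<Omega>) S
         \<and> convex_in_regime (ber f M \<pi> lab s \<Omega>) S"
proof -
  interpret scale_mixture f \<sigma>1 \<sigma>2 using assms(1,2,4,5,7) by unfold_locales auto
  have S: "S = low_noise_regime CARD('n) \<sigma>2 (dmin M s \<Omega>)" by (simp add: S_def low_noise_regime_def)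
  have d: "0 \<le> dmin M s \<Omega>" using assms(8) by (rule dmin_nonneg)
  have far: "dmin M s \<Omega> \<le> dist r (s k)" if "k < M" "r \<notin> \<Omega> k" for k r
    using that assms(14)[OF that(1)] by (intro dmin_le_dist_outside)
  have pep: "convex_in_regime (pep f s \<Omega> i j) S" if "i < M" "j < M" "i \<noteq> j" for i j
  proof -
    have "prob_in f (s i) (\<Omega> j) = pep f s \<Omega> i j" by (simp add: fun_eq_iff pep_def)
    moreover have "r \<in> \<Omega> j \<Longrightarrow> r \<notin> \<Omega> i" for r using assms(13)[OF that] by blast
    ultimately show ?thesis
      unfolding S using that assms(12) d far by (metis convex_in_regime_prob_in)
  qed
  have ser: "convex_in_regime (ser f M \<pi> s \<Omega>) S"
    unfolding S using assms(9,12) d far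
    by (intro convex_in_regime_ser convex_in_regime_one_minus_prob_in) auto
  have ber: "convex_in_regime (ber f M \<pi> lab s \<Omega>) S"
    using assms(8,9) pep by (rule convex_in_regime_ber)
  show ?thesis using pep ser ber by blast
qed

end
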